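(* Let $\epsilon\in\{\pm1\}$, and let $S$ ($n\times n$), $V$ ($n\times m_1$), $\bar V$ ($n\times m_2$) be constant complex matrices, and $K,\bar K$ constant Hermitian $n\times n$ matrices solving $$SK+KS^\dagger=VV^\dagger,\qquad S^\dagger\bar K+\bar KS=\bar V\bar V^\dagger.$$ Then, with $\Xi=e^{-xS-\mathrm{i}tS^2}$ ($x,t\in\mathbb{R}$), the function $$q=V^\dagger\big((\Xi^\dagger)^{-1}-\epsilon\bar K\Xi K\big)^{-1}\bar V$$ (wherever the inverse exists) solves the $m_1\times m_2$ matrix NLS equation $\mathrm{i}q_t+q_{xx}-2\epsilon qq^\dagger q=0$.
   Context: ${}^\dagger$ denotes conjugate transpose. *)

theory Defs
  imports "HOL-Analysis.Analysis"
begin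

definition cadj :: "complex^'n^'m \<Rightarrow> complex^'m^'n" where
  "cadj A = (\<chi> i j. cnj (A $ j $ i))"

definition msc :: "complex \<Rightarrow> complex^'n^'m \<Rightarrow> complex^'n^'m" where
  "msc c A = (\<chi> i j. c * A $ i $ j)"

fun mpow :: "complex^'n^'n \<Rightarrow> nat \<Rightarrow> complex^'n^'n" where
  "mpow A 0 = mat 1"
| "mpow A (Suc k) = A ** mpow A k"

definition mexp :: "complex^'n^'n \<Rightarrow> complex^'n^'n" where
  "mexp A = (\<Sum>k. (1 / fact k) *\<^sub>R mpow A k)"

definition Xi :: "complex^'n^'n \<Rightarrow> real \<Rightarrow> real \<Rightarrow> complex^'n^'n" where
  "Xi S x t = mexp (- msc (complex_of_real x) S - msc (\<i> * complex_of_real t) (S ** S))"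

definition Mmat :: "real \<Rightarrow> complex^'n^'n \<Rightarrow> complex^'n^'n \<Rightarrow> complex^'n^'n \<Rightarrow> real \<Rightarrow> real \<Rightarrow> complex^'n^'n" where
  "Mmat \<epsilon> S K Kbar x t = matrix_inv (cadj (Xi S x t)) - msc (complex_of_real \<epsilon>) (Kbar ** Xi S x t ** K)"

definition qsol :: "real \<Rightarrow> complex^'n^'n \<Rightarrow> complex^'n^'n \<Rightarrow> complex^'n^'n \<Rightarrow> complex^'m1^'n \<Rightarrow> complex^'m2^'n \<Rightarrow> real \<Rightarrow> real \<Rightarrow> complex^'m2^'m1" where
  "qsol \<epsilon> S K Kbar V Vbar x t = cadj V ** matrix_inv (Mmat \<epsilon> S K Kbar x t) ** Vbar"

end

theory Submission
  imports Defs
begin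

(* Write X = Xi S x t = exp(-xS - itS^2), E = (X^dagger)^{-1}, M = E - eps Kbar X K and
   N = M^{-1}, so that q = V^dagger N Vbar.  Differentiating the exponential gives
     M_x = E S^dagger + eps Kbar S X K,  M_xx = E S^dagger S^dagger - eps Kbar S S X K,
     M_t = -i M_xx,
   and differentiating the inverse gives q_t = -V^dagger N M_t N Vbar and
   q_xx = V^dagger (2 N M_x N M_x N - N M_xx N) Vbar.  Hence
     i q_t + q_xx = 2 V^dagger N (M_x N M_x - M_xx) N Vbar,
   and the two Sylvester equations together with N^dagger = X + eps X K N Kbar X turn
   M_x N M_x - M_xx into eps Vbar Vbar^dagger N^dagger V V^dagger, which is the cubic term.

   Square complex matrices are not a type-class algebra in HOL-Analysis, so the file first
   embeds them into the Banach algebra of real-linear endomorphisms of C^n.  There the matrix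
   exponential becomes the library's exp, and the two algebraic identities (for N^dagger and
   for M_x N M_x - M_xx) are proved in an arbitrary real algebra. *)

section \<open>The Banach algebra of real-linear endomorphisms of \<open>\<complex>^n\<close>\<close>

typedef (overloaded) 'n endo = "UNIV :: ((complex^'n) \<Rightarrow>\<^sub>L (complex^'n)) set"
  morphisms rep abs by simp

setup_lifting type_definition_endo

instantiation endo :: (finite) real_normed_algebra_1
begin

lift_definition norm_endo :: "'a endo \<Rightarrow> real" is norm .
lift_definition minus_endo :: "'a endo \<Rightarrow> 'a endo \<Rightarrow> 'a endo" is "(-)" .
lift_definition plus_endo :: "'a endo \<Rightarrow> 'a endo \<Rightarrow> 'a endo" is "(+)" .
lift_definition uminus_endo :: "'a endo \<Rightarrow> 'a endo" is uminus .
lift_definition zero_endo :: "'a endo" is 0 .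
lift_definition one_endo :: "'a endo" is id_blinfun .
lift_definition times_endo :: "'a endo \<Rightarrow> 'a endo \<Rightarrow> 'a endo" is "(o\<^sub>L)" .
lift_definition scaleR_endo :: "real \<Rightarrow> 'a endo \<Rightarrow> 'a endo" is "scaleR" .

definition dist_endo :: "'a endo \<Rightarrow> 'a endo \<Rightarrow> real"
  where "dist_endo a b = norm (a - b)"

definition uniformity_endo :: "('a endo \<times> 'a endo) filter" where
  "uniformity_endo = (INF e\<in>{0 <..}. principal {(x, y). dist x y < e})"

definition open_endo :: "'a endo set \<Rightarrow> bool"
  where "open_endo S = (\<forall>x\<in>S. \<forall>\<^sub>F (x', y) in uniformity. x' = x \<longrightarrow> y \<in> S)"

definition sgn_endo :: "'a endo \<Rightarrow> 'a endo"
  where "sgn_endo x = scaleR (inverse (norm x)) x"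

instance
proof
  fix a b c :: "'a endo" and r s :: real
  show "a + b + c = a + (b + c)" by transfer (simp add: add.assoc)
  show "a + b = b + a" by transfer (simp add: add.commute)
  show "0 + a = a" by transfer simp
  show "- a + a = 0" by transfer simp
  show "a - b = a + - b" by transfer simp
  show "r *\<^sub>R (a + b) = r *\<^sub>R a + r *\<^sub>R b" by transfer (simp add: scaleR_add_right)
  show "(r + s) *\<^sub>R a = r *\<^sub>R a + s *\<^sub>R a" by transfer (simp add: scaleR_add_left)
  show "r *\<^sub>R s *\<^sub>R a = (r * s) *\<^sub>R a" by transfer simp
  show "1 *\<^sub>R a = a" by transfer simp
  show "a * b * c = a * (b * c)" by transfer (auto intro!: blinfun_eqI)
  show "(a + b) * c = a * c + b * c" by transfer (auto intro!: blinfun_eqI simp: blinfun.bilinear_simps)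
  show "a * (b + c) = a * b + a * c" by transfer (auto intro!: blinfun_eqI simp: blinfun.bilinear_simps)
  show "1 * a = a" by transfer (auto intro!: blinfun_eqI)
  show "a * 1 = a" by transfer (auto intro!: blinfun_eqI)
  show "(0::'a endo) \<noteq> 1"
  proof transfer
    have "blinfun_apply (id_blinfun :: (complex^'a) \<Rightarrow>\<^sub>L (complex^'a)) (axis undefined 1) \<noteq> 0"
      by (simp add: axis_nth vec_eq_iff) (metis axis_nth one_neq_zero)
    then show "(0::(complex^'a) \<Rightarrow>\<^sub>L (complex^'a)) \<noteq> id_blinfun" by (metis blinfun.zero_left)
  qed
  show "r *\<^sub>R a * b = r *\<^sub>R (a * b)" by transfer (auto intro!: blinfun_eqI simp: blinfun.bilinear_simps)
  show "a * r *\<^sub>R b = r *\<^sub>R (a * b)" by transfer (auto intro!: blinfun_eqI simp: blinfun.bilinear_simps)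
  show "norm (a * b) \<le> norm a * norm b" by transfer (rule norm_blinfun_compose)
  show "norm (1::'a endo) = 1" by transfer simp
  show "dist a b = norm (a - b)" by (simp add: dist_endo_def)
  show "sgn a = inverse (norm a) *\<^sub>R a" by (simp add: sgn_endo_def)
  show "(uniformity :: ('a endo \<times> 'a endo) filter) = (INF e\<in>{0 <..}. principal {(x, y). dist x y < e})"
    by (simp add: uniformity_endo_def)
  show "\<And>U :: 'a endo set. open U = (\<forall>x\<in>U. \<forall>\<^sub>F (x', y) in uniformity. x' = x \<longrightarrow> y \<in> U)"
    by (simp add: open_endo_def)
  show "norm (a + b) \<le> norm a + norm b" by transfer (rule norm_triangle_ineq)
  show "norm (r *\<^sub>R a) = \<bar>r\<bar> * norm a" by transfer simp
  show "(norm a = 0) = (a = 0)" by transfer simp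
qed
end

lemma dist_endo_rep: "dist a b = dist (rep a) (rep b)"
  by (simp add: dist_endo_def dist_norm norm_endo.rep_eq minus_endo.rep_eq)

text \<open>Completeness is inherited from the space of bounded linear maps; it is what makes
  the library's exponential series available.\<close>
instance endo :: (finite) banach
proof
  fix X :: "nat \<Rightarrow> 'a endo"
  assume "Cauchy X"
  then have "Cauchy (\<lambda>n. rep (X n))"
    unfolding Cauchy_def by (simp add: dist_endo_rep)
  then obtain L where L: "(\<lambda>n. rep (X n)) \<longlonglongrightarrow> L"
    using convergent_def Cauchy_convergent_iff by blast
  have "X \<longlonglongrightarrow> abs L"
    using L unfolding lim_sequentially by (simp add: dist_endo_rep abs_inverse)
  then show "convergent X" by (auto simp: convergent_def)
qed

lemma exp_commutes:
  fixes a b :: "'a::{real_normed_algebra_1,banach}"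
  assumes "a * b = b * a"
  shows "a * exp b = exp b * a"
proof -
  have "(\<lambda>k. a * (b ^ k /\<^sub>R fact k)) sums (a * exp b)"
    by (rule bounded_linear.sums[OF bounded_linear_mult_right exp_converges])
  moreover have "(\<lambda>k. (b ^ k /\<^sub>R fact k) * a) sums (exp b * a)"
    by (rule bounded_linear.sums[OF bounded_linear_mult_left exp_converges])
  moreover have "a * (b ^ k /\<^sub>R fact k) = (b ^ k /\<^sub>R fact k) * a" for k
    using power_commuting_commutes[OF assms[symmetric], of k] by simp
  ultimately show ?thesis using sums_unique2 by force
qed

lemma matrix_add_rdistrib: "((A::complex^'n^'m) + B) ** (C::complex^'p^'n) = A ** C + B ** C"
  by (simp add: vec_eq_iff matrix_matrix_mult_def sum.distrib distrib_right)

lemma matrix_diff_ldistrib: "(A::complex^'n^'m) ** ((B::complex^'p^'n) - C) = A ** B - A ** C"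
  by (simp add: vec_eq_iff matrix_matrix_mult_def sum_subtractf right_diff_distrib)

lemma matrix_diff_rdistrib: "((A::complex^'n^'m) - B) ** (C::complex^'p^'n) = A ** C - B ** C"
  by (simp add: vec_eq_iff matrix_matrix_mult_def sum_subtractf left_diff_distrib)

lemma matrix_neg_left: "(- (A::complex^'n^'m)) ** (C::complex^'p^'n) = - (A ** C)"
  by (simp add: vec_eq_iff matrix_matrix_mult_def sum_negf)

lemma matrix_neg_right: "(A::complex^'n^'m) ** (- (C::complex^'p^'n)) = - (A ** C)"
  by (simp add: vec_eq_iff matrix_matrix_mult_def sum_negf)

lemma matrix_scaleR_left: "((c *\<^sub>R A)::complex^'n^'m) ** (B::complex^'p^'n) = c *\<^sub>R (A ** B)"
  by (simp add: scalar_matrix_assoc)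

lemma matrix_scaleR_right: "(A::complex^'n^'m) ** ((c *\<^sub>R B)::complex^'p^'n) = c *\<^sub>R (A ** B)"
  by (simp add: vec_eq_iff matrix_matrix_mult_def scaleR_sum_right)

lemma bounded_bilinear_matrix_mult:
  "bounded_bilinear (\<lambda>(A::complex^'n^'m) (B::complex^'p^'n). A ** B)"
  unfolding bilinear_conv_bounded_bilinear[symmetric] bilinear_def
  by (auto intro!: linearI simp: matrix_add_ldistrib matrix_add_rdistrib
      matrix_scaleR_left matrix_scaleR_right)

lemma cadj_add: "cadj (A + B) = cadj A + cadj B"
  by (simp add: cadj_def vec_eq_iff)

lemma cadj_diff: "cadj (A - B) = cadj A - cadj B"
  by (simp add: cadj_def vec_eq_iff)

lemma cadj_scaleR: "cadj (c *\<^sub>R A) = c *\<^sub>R cadj A"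
  by (simp add: cadj_def vec_eq_iff)

lemma cadj_cadj [simp]: "cadj (cadj A) = A"
  by (simp add: cadj_def vec_eq_iff)

lemma cadj_one [simp]: "cadj (mat 1) = mat 1"
  by (simp add: cadj_def vec_eq_iff mat_def)

lemma cadj_mult: "cadj ((A::complex^'n^'m) ** (B::complex^'p^'n)) = cadj B ** cadj A"
  by (simp add: cadj_def vec_eq_iff matrix_matrix_mult_def mult.commute)

lemma cadj_msc: "cadj (msc c A) = msc (cnj c) (cadj A)"
  by (simp add: cadj_def msc_def vec_eq_iff)

lemma bounded_linear_cadj: "bounded_linear (cadj :: complex^'n^'m \<Rightarrow> complex^'m^'n)"
  unfolding linear_conv_bounded_linear[symmetric]
  by (rule linearI) (simp_all add: cadj_add cadj_scaleR)

lemma msc_real: "msc (complex_of_real r) A = r *\<^sub>R A"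
  by (simp add: msc_def vec_eq_iff of_real_def)

lemma msc_msc: "msc c (msc d A) = msc (c * d) A"
  by (simp add: msc_def vec_eq_iff)

lemma msc_minus: "msc c (- A) = - msc c A"
  by (simp add: msc_def vec_eq_iff)

lemma msc_one: "msc 1 A = A"
  by (simp add: msc_def vec_eq_iff)

lemma msc_diff: "msc c (A - B) = msc c A - msc c B"
  by (simp add: msc_def vec_eq_iff algebra_simps)

lemma msc_scaleR: "msc c (r *\<^sub>R A) = r *\<^sub>R msc c A"
  by (simp add: msc_def vec_eq_iff)

lemma msc_uminus_scalar: "msc (- c) A = - msc c A"
  by (simp add: msc_def vec_eq_iff)

lemma msc_mult_left: "msc c (A::complex^'n^'m) ** (B::complex^'p^'n) = msc c (A ** B)"
  by (simp add: msc_def vec_eq_iff matrix_matrix_mult_def sum_distrib_left mult.assoc)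

lemma msc_mult_right: "(A::complex^'n^'m) ** msc c (B::complex^'p^'n) = msc c (A ** B)"
  by (simp add: msc_def vec_eq_iff matrix_matrix_mult_def sum_distrib_left algebra_simps)

lemma matrix_inv_both:
  assumes "invertible (A::'a::semiring_1^'n^'m)"
  shows "A ** matrix_inv A = mat 1 \<and> matrix_inv A ** A = mat 1"
  using assms unfolding invertible_def matrix_inv_def by (rule someI_ex)

lemma matrix_inv_right: "invertible A \<Longrightarrow> A ** matrix_inv A = mat 1"
  using matrix_inv_both by blast

lemma matrix_inv_left: "invertible A \<Longrightarrow> matrix_inv A ** A = mat 1"
  using matrix_inv_both by blast

lemma matrix_inv_unique:
  fixes A B :: "'a::semiring_1^'n^'n"
  assumes "A ** B = mat 1" "B ** A = mat 1"
  shows "matrix_inv A = B"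
proof -
  have inv: "invertible A" using assms unfolding invertible_def by blast
  have "matrix_inv A = (B ** A) ** matrix_inv A" by (simp add: assms)
  also have "\<dots> = B ** (A ** matrix_inv A)" by (simp add: matrix_mul_assoc)
  also have "\<dots> = B" by (simp add: matrix_inv_right[OF inv])
  finally show ?thesis .
qed

section \<open>Embedding square matrices into the endomorphism algebra\<close>

text \<open>A matrix acts on \<open>\<complex>^n\<close> by \<open>*v\<close>; \<open>emb\<close> is an injective ring homomorphism, and \<open>unemb\<close>
  (reading off the columns) is a bounded linear left inverse.\<close>

definition emb :: "complex^'n^'n \<Rightarrow> 'n endo" where
  "emb A = abs (Blinfun (\<lambda>v. A *v v))"

definition unemb :: "'n endo \<Rightarrow> complex^'n^'n" where
  "unemb F = (\<chi> i j. blinfun_apply (rep F) (axis j 1) $ i)"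

lemma rep_emb: "blinfun_apply (rep (emb A)) v = A *v v"
  by (simp add: emb_def abs_inverse bounded_linear_Blinfun_apply[OF matrix_vector_mul_bounded_linear])

lemma unemb_emb: "unemb (emb A) = A"
  by (simp add: unemb_def rep_emb matrix_vector_mult_def axis_def if_distrib vec_eq_iff cong: if_cong)

lemma emb_eq_iff: "emb A = emb B \<longleftrightarrow> A = B"
  by (metis unemb_emb)

lemma emb_mult: "emb (A ** B) = emb A * emb B"
  by (rule rep_inject[THEN iffD1], rule blinfun_eqI)
     (simp add: times_endo.rep_eq rep_emb matrix_vector_mul_assoc)

lemma emb_one: "emb (mat 1) = 1"
  by (rule rep_inject[THEN iffD1], rule blinfun_eqI) (simp add: one_endo.rep_eq rep_emb)

lemma emb_add: "emb (A + B) = emb A + emb B"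
  by (rule rep_inject[THEN iffD1], rule blinfun_eqI)
     (simp add: plus_endo.rep_eq plus_blinfun.rep_eq rep_emb matrix_vector_mult_add_rdistrib)

lemma emb_scaleR: "emb (c *\<^sub>R A) = c *\<^sub>R emb A"
  by (rule rep_inject[THEN iffD1], rule blinfun_eqI)
     (simp add: scaleR_endo.rep_eq scaleR_blinfun.rep_eq rep_emb vec_eq_iff matrix_vector_mult_def
       scaleR_sum_right)

lemma emb_minus: "emb (- A) = - emb A"
  using emb_scaleR[of "-1" A] by simp

lemma emb_diff: "emb (A - B) = emb A - emb B"
  using emb_add[of A "- B"] by (simp add: emb_minus)

lemma emb_zero: "emb 0 = 0"
  using emb_scaleR[of 0 "0::complex^'n^'n"] by simp

lemmas emb_hom = emb_mult emb_one emb_add emb_scaleR emb_minus emb_diff emb_zero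

lemma bounded_linear_emb: "bounded_linear (emb :: complex^'n^'n \<Rightarrow> 'n endo)"
  unfolding linear_conv_bounded_linear[symmetric]
  by (rule linearI) (simp_all add: emb_add emb_scaleR)

lemma norm_axis_complex: "norm (axis j (1::complex)) = 1"
proof -
  have "norm (axis j (1::complex)) = L2_set (\<lambda>i. if i = j then 1 else 0) UNIV"
    unfolding norm_vec_def by (rule L2_set_cong) (auto simp: axis_def)
  also have "\<dots> = 1"
    by (simp add: L2_set_def if_distrib[of "\<lambda>x. x^2"] cong: if_cong)
  finally show ?thesis .
qed

lemma bounded_linear_unemb: "bounded_linear (unemb :: 'n endo \<Rightarrow> complex^'n^'n)"
proof (rule bounded_linear_intro[where K = "of_nat (CARD('n) * CARD('n))"])
  fix F G :: "'n endo" and r :: real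
  show "unemb (F + G) = unemb F + unemb G"
    by (simp add: unemb_def vec_eq_iff plus_endo.rep_eq blinfun.bilinear_simps)
  show "unemb (r *\<^sub>R F) = r *\<^sub>R unemb F"
    by (simp add: unemb_def vec_eq_iff scaleR_endo.rep_eq blinfun.bilinear_simps)
  have entry: "norm (unemb F $ i $ j) \<le> norm F" for i j
  proof -
    have "norm (unemb F $ i $ j) \<le> norm (blinfun_apply (rep F) (axis j 1))"
      unfolding unemb_def by (simp add: Finite_Cartesian_Product.norm_nth_le)
    also have "\<dots> \<le> norm (rep F) * norm (axis j (1::complex))" by (rule norm_blinfun)
    also have "\<dots> = norm F" by (simp add: norm_axis_complex norm_endo.rep_eq)
    finally show ?thesis .
  qed
  have "norm (unemb F) \<le> (\<Sum>i\<in>UNIV. norm (unemb F $ i))"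
    by (simp add: norm_vec_def L2_set_le_sum)
  also have "\<dots> \<le> (\<Sum>i\<in>(UNIV::'n set). (\<Sum>j\<in>(UNIV::'n set). norm F))"
  proof (rule sum_mono)
    fix i
    have "norm (unemb F $ i) \<le> (\<Sum>j\<in>UNIV. norm (unemb F $ i $ j))"
      by (simp add: norm_vec_def L2_set_le_sum)
    also have "\<dots> \<le> (\<Sum>j\<in>(UNIV::'n set). norm F)" by (rule sum_mono[OF entry])
    finally show "norm (unemb F $ i) \<le> (\<Sum>j\<in>(UNIV::'n set). norm F)" .
  qed
  also have "\<dots> = norm F * of_nat (CARD('n) * CARD('n))" by simp
  finally show "norm (unemb F) \<le> norm F * of_nat (CARD('n) * CARD('n))" .
qed

section \<open>The matrix exponential\<close>

lemma emb_mpow: "emb (mpow A k) = emb A ^ k"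
  by (induction k) (simp_all add: emb_one emb_mult)

text \<open>The power series defining \<open>mexp\<close> is the image of the exponential series of \<open>emb A\<close>.\<close>
lemma emb_mexp: "emb (mexp A) = exp (emb A)"
proof -
  have series_term: "emb ((1 / fact k) *\<^sub>R mpow A k) = emb A ^ k /\<^sub>R fact k" for k
    by (simp add: emb_scaleR emb_mpow divide_inverse_commute)
  have "(\<lambda>k. unemb (emb A ^ k /\<^sub>R fact k)) sums unemb (exp (emb A))"
    by (rule bounded_linear.sums[OF bounded_linear_unemb exp_converges])
  then have "(\<lambda>k. (1 / fact k) *\<^sub>R mpow A k) sums unemb (exp (emb A))"
    by (simp add: series_term[symmetric] unemb_emb)
  then have "(\<lambda>k. emb ((1 / fact k) *\<^sub>R mpow A k)) sums emb (mexp A)"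
    unfolding mexp_def by (intro bounded_linear.sums[OF bounded_linear_emb] summable_sums sums_summable)
  then have "(\<lambda>k. emb A ^ k /\<^sub>R fact k) sums emb (mexp A)" unfolding series_term .
  then show ?thesis using exp_converges sums_unique2 by blast
qed

lemma mexp_neg_inverse: "mexp C ** mexp (- C) = mat 1"
  by (simp add: emb_eq_iff[symmetric] emb_mult emb_mexp emb_minus emb_one exp_minus_inverse)

lemma mexp_commute: "A ** B = B ** A \<Longrightarrow> A ** mexp B = mexp B ** A"
  unfolding emb_eq_iff[symmetric] emb_mult emb_mexp by (rule exp_commutes)

lemma mexp_line_deriv:
  assumes "A ** C = C ** A"
  shows "((\<lambda>s. mexp (s *\<^sub>R A + C)) has_vector_derivative (A ** mexp (s *\<^sub>R A + C))) (at s)"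
proof -
  have com: "(s *\<^sub>R emb A) * emb C = emb C * (s *\<^sub>R emb A)" for s
    using arg_cong[OF assms, of emb] by (simp add: emb_mult)
  have split: "emb (mexp (s *\<^sub>R A + C)) = exp (s *\<^sub>R emb A) * exp (emb C)" for s
    by (simp add: emb_mexp exp_add_commuting[OF com, symmetric] emb_add emb_scaleR)
  have "((\<lambda>s. exp (s *\<^sub>R emb A) * exp (emb C)) has_vector_derivative
        (emb A * exp (s *\<^sub>R emb A)) * exp (emb C)) (at s)"
    using has_vector_derivative_mult[OF exp_scaleR_has_vector_derivative_left[of "emb A" s]
        has_vector_derivative_const[of "exp (emb C)"]] by simp
  from bounded_linear.has_vector_derivative[OF bounded_linear_unemb this]
  show ?thesis
    by (simp add: split[symmetric] mult.assoc emb_mult[symmetric] unemb_emb)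
qed

lemma mexp_plane_deriv_x:
  assumes "A ** B = B ** A"
  shows "((\<lambda>x. mexp (x *\<^sub>R A + t *\<^sub>R B)) has_vector_derivative A ** mexp (x *\<^sub>R A + t *\<^sub>R B)) (at x)"
  by (rule mexp_line_deriv) (simp add: matrix_scaleR_left matrix_scaleR_right assms)

lemma mexp_plane_deriv_t:
  assumes "A ** B = B ** A"
  shows "((\<lambda>t. mexp (x *\<^sub>R A + t *\<^sub>R B)) has_vector_derivative B ** mexp (x *\<^sub>R A + t *\<^sub>R B)) (at t)"
  using mexp_line_deriv[of B "x *\<^sub>R A" t]
  by (simp add: matrix_scaleR_left matrix_scaleR_right assms add.commute)

section \<open>Calculus of matrix-valued functions of a real variable\<close>

lemma has_vector_derivative_matrix_mult:
  fixes f :: "real \<Rightarrow> complex^'n^'m" and g :: "real \<Rightarrow> complex^'p^'n"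
  assumes "(f has_vector_derivative f') (at z)" "(g has_vector_derivative g') (at z)"
  shows "((\<lambda>z. f z ** g z) has_vector_derivative (f z ** g' + f' ** g z)) (at z)"
  using bounded_bilinear.has_vector_derivative[OF bounded_bilinear_matrix_mult assms] .

lemma has_vector_derivative_sandwich:
  fixes f :: "real \<Rightarrow> complex^'n^'m" and P :: "complex^'m^'k" and Q :: "complex^'p^'n"
  assumes "(f has_vector_derivative f') (at z)"
  shows "((\<lambda>z. P ** f z ** Q) has_vector_derivative P ** f' ** Q) (at z)"
  using has_vector_derivative_matrix_mult[OF has_vector_derivative_matrix_mult[OF
        has_vector_derivative_const[of P] assms] has_vector_derivative_const[of Q]]
  by simp

lemma has_vector_derivative_cadj:
  fixes f :: "real \<Rightarrow> complex^'n^'m"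
  assumes "(f has_vector_derivative f') (at z)"
  shows "((\<lambda>z. cadj (f z)) has_vector_derivative cadj f') (at z)"
  using bounded_linear.has_vector_derivative[OF bounded_linear_cadj assms] .

lemma has_vector_derivative_const_scaleR:
  fixes f :: "real \<Rightarrow> complex^'n^'m"
  assumes "(f has_vector_derivative f') (at z)"
  shows "((\<lambda>z. c *\<^sub>R f z) has_vector_derivative c *\<^sub>R f') (at z)"
  using bounded_linear.has_vector_derivative[OF bounded_linear_scaleR_right assms] .

lemma has_vector_derivative_iff_difference_quotient:
  fixes g :: "real \<Rightarrow> 'a::real_normed_vector"
  shows "(g has_vector_derivative D) (at y) \<longleftrightarrow> ((\<lambda>z. (g z - g y) /\<^sub>R (z - y)) \<longlongrightarrow> D) (at y)"
proof -
  let ?R = "\<lambda>z. ((g z - g y) - (z - y) *\<^sub>R D) /\<^sub>R norm (z - y)"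
  have "norm (?R z) = norm ((g z - g y) /\<^sub>R (z - y) - D)" if "z \<noteq> y" for z
  proof -
    have "(g z - g y) - (z - y) *\<^sub>R D = (z - y) *\<^sub>R ((g z - g y) /\<^sub>R (z - y) - D)"
      using that by (simp add: scaleR_diff_right)
    then show ?thesis using that by (simp add: abs_mult)
  qed
  then have same_norm: "\<forall>\<^sub>F z in at y. norm (?R z) = norm ((g z - g y) /\<^sub>R (z - y) - D)"
    by (auto simp: eventually_at_filter)
  have "(g has_vector_derivative D) (at y) \<longleftrightarrow> (?R \<longlongrightarrow> 0) (at y)"
    unfolding has_vector_derivative_def has_derivative_at_within
    by (simp add: bounded_linear_scaleR_left)
  also have "\<dots> \<longleftrightarrow> ((\<lambda>z. norm (?R z)) \<longlongrightarrow> 0) (at y)"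
    by (rule tendsto_norm_zero_iff[symmetric])
  also have "\<dots> \<longleftrightarrow> ((\<lambda>z. norm ((g z - g y) /\<^sub>R (z - y) - D)) \<longlongrightarrow> 0) (at y)"
    by (rule tendsto_cong[OF same_norm])
  also have "\<dots> \<longleftrightarrow> ((\<lambda>z. (g z - g y) /\<^sub>R (z - y)) \<longlongrightarrow> D) (at y)"
    by (simp add: tendsto_norm_zero_iff LIM_zero_iff)
  finally show ?thesis .
qed

lemma tendsto_det:
  fixes f :: "'b \<Rightarrow> complex^'n^'n"
  assumes "(f \<longlongrightarrow> A) F"
  shows "((\<lambda>z. det (f z)) \<longlongrightarrow> det A) F"
  unfolding det_def by (intro tendsto_sum tendsto_mult tendsto_const tendsto_prod tendsto_vec_nth assms)

text \<open>Cramer's rule expresses the inverse by determinants, hence continuously.\<close>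
lemma matrix_inv_cramer:
  fixes A :: "complex^'n^'n"
  assumes d: "det A \<noteq> 0"
  shows "matrix_inv A = (\<chi> k j. det (\<chi> i l. if l = k then axis j 1 $ i else A $ i $ l) / det A)"
proof -
  have inv: "invertible A" using d invertible_det_nz by blast
  have "A *v (matrix_inv A *v axis j 1) = axis j 1" for j
    by (simp add: matrix_vector_mul_assoc matrix_inv_right[OF inv])
  then have col: "matrix_inv A *v axis j 1
      = (\<chi> k. det (\<chi> i l. if l = k then axis j 1 $ i else A $ i $ l) / det A)" for j
    by (rule cramer[OF d, THEN iffD1])
  have "(matrix_inv A *v axis j 1) $ k = matrix_inv A $ k $ j" for k j
    by (simp add: matrix_vector_mult_def axis_def if_distrib cong: if_cong)
  then show ?thesis using col by (simp add: vec_eq_iff)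
qed

lemma tendsto_matrix_inv:
  fixes f :: "'b \<Rightarrow> complex^'n^'n"
  assumes f: "(f \<longlongrightarrow> A) F" and d: "det A \<noteq> 0"
  shows "((\<lambda>z. matrix_inv (f z)) \<longlongrightarrow> matrix_inv A) F"
proof -
  let ?C = "\<lambda>B::complex^'n^'n. (\<chi> k j. det (\<chi> i l. if l = k then axis j 1 $ i else B $ i $ l) / det B)"
  have "((\<lambda>z. ?C (f z)) \<longlongrightarrow> ?C A) F"
    apply (intro tendsto_vec_lambda tendsto_divide tendsto_det f d)
    subgoal for k j i l by (cases "l = k") (simp_all add: tendsto_vec_nth f)
    done
  moreover have "\<forall>\<^sub>F z in F. ?C (f z) = matrix_inv (f z)"
    using tendsto_imp_eventually_ne[OF tendsto_det[OF f] d]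
    by eventually_elim (simp add: matrix_inv_cramer)
  ultimately show ?thesis
    using matrix_inv_cramer[OF d] by (simp add: tendsto_cong[symmetric])
qed

lemma eventually_invertible:
  fixes f :: "'b \<Rightarrow> complex^'n^'n"
  assumes "(f \<longlongrightarrow> A) F" and "invertible A"
  shows "\<forall>\<^sub>F z in F. invertible (f z)"
  using tendsto_imp_eventually_ne[OF tendsto_det[OF assms(1)]] assms(2)
  by (simp add: invertible_det_nz)

text \<open>The derivative of the inverse: \<open>(M\<^sup>-\<^sup>1)' = - M\<^sup>-\<^sup>1 M' M\<^sup>-\<^sup>1\<close>, obtained from the identity
  \<open>N z - N y = N z (M y - M z) N y\<close> for the difference quotients.\<close>
lemma has_vector_derivative_matrix_inv:
  fixes M :: "real \<Rightarrow> complex^'n^'n"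
  assumes M: "(M has_vector_derivative M') (at y)" and inv: "invertible (M y)"
  shows "((\<lambda>z. matrix_inv (M z)) has_vector_derivative - (matrix_inv (M y) ** M' ** matrix_inv (M y))) (at y)"
proof -
  define N where "N z = matrix_inv (M z)" for z
  have Mc: "(M \<longlongrightarrow> M y) (at y)"
    using has_vector_derivative_continuous[OF M] by (simp add: continuous_at)
  have Nc: "(N \<longlongrightarrow> N y) (at y)"
    unfolding N_def by (rule tendsto_matrix_inv[OF Mc]) (use inv invertible_det_nz in blast)
  have quot: "((\<lambda>z. (M z - M y) /\<^sub>R (z - y)) \<longlongrightarrow> M') (at y)"
    using M has_vector_derivative_iff_difference_quotient by blast
  have "((\<lambda>z. - (N z ** ((M z - M y) /\<^sub>R (z - y)) ** N y)) \<longlongrightarrow> - (N y ** M' ** N y)) (at y)"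
    by (intro tendsto_minus bounded_bilinear.tendsto[OF bounded_bilinear_matrix_mult] Nc quot tendsto_const)
  moreover have "\<forall>\<^sub>F z in at y. - (N z ** ((M z - M y) /\<^sub>R (z - y)) ** N y) = (N z - N y) /\<^sub>R (z - y)"
    using eventually_invertible[OF Mc inv]
  proof eventually_elim
    case (elim z)
    have "N z - N y = N z ** (M y - M z) ** N y"
      by (simp add: N_def matrix_diff_ldistrib matrix_diff_rdistrib matrix_inv_right[OF inv]
          matrix_inv_left[OF elim] matrix_mul_assoc[symmetric])
    then show ?case
      by (simp only: matrix_scaleR_left matrix_scaleR_right minus_diff_eq[of "M y" "M z", symmetric]
          matrix_neg_left matrix_neg_right scaleR_minus_right minus_minus)
  qed
  ultimately have "((\<lambda>z. (N z - N y) /\<^sub>R (z - y)) \<longlongrightarrow> - (N y ** M' ** N y)) (at y)"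
    using tendsto_cong by fastforce
  then show ?thesis
    unfolding N_def has_vector_derivative_iff_difference_quotient .
qed

lemma inverse_sandwich_deriv:
  fixes M :: "real \<Rightarrow> complex^'n^'n" and P :: "complex^'n^'k" and Q :: "complex^'p^'n"
  assumes "(M has_vector_derivative M') (at y)" and "invertible (M y)"
  shows "((\<lambda>z. P ** matrix_inv (M z) ** Q) has_vector_derivative
           - (P ** matrix_inv (M y) ** M' ** matrix_inv (M y) ** Q)) (at y)"
  using has_vector_derivative_sandwich[OF has_vector_derivative_matrix_inv[OF assms], of P Q]
  by (simp add: matrix_neg_left matrix_neg_right matrix_mul_assoc)

text \<open>It requires \<open>M\<close> to be differentiable everywhere, so
  that the first derivative exists in a neighbourhood of \<open>x\<close>.\<close>
lemma inverse_sandwich_second_deriv: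
  fixes M M' :: "real \<Rightarrow> complex^'n^'n" and P :: "complex^'n^'k" and Q :: "complex^'p^'n"
  assumes M: "\<And>y. (M has_vector_derivative M' y) (at y)"
    and M': "(M' has_vector_derivative M'') (at x)"
    and inv: "invertible (M x)"
  defines "N \<equiv> matrix_inv (M x)"
  shows "(\<forall>\<^sub>F y in nhds x. (\<lambda>z. P ** matrix_inv (M z) ** Q) differentiable (at y))
     \<and> ((\<lambda>y. vector_derivative (\<lambda>z. P ** matrix_inv (M z) ** Q) (at y)) has_vector_derivative
          P ** (2 *\<^sub>R (N ** M' x ** N ** M' x ** N) - N ** M'' ** N) ** Q) (at x)"
proof -
  let ?g = "\<lambda>z. P ** matrix_inv (M z) ** Q"
  let ?N' = "\<lambda>y. - (matrix_inv (M y) ** M' y ** matrix_inv (M y))"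
  have Mc: "(M \<longlongrightarrow> M x) (at x)"
    using has_vector_derivative_continuous[OF M] by (simp add: continuous_at)
  have "\<forall>\<^sub>F y in nhds x. invertible (M y)"
    using eventually_invertible[OF Mc inv] inv unfolding eventually_at_filter
    by (auto elim: eventually_mono)
  then obtain U where U: "open U" "x \<in> U" "\<And>y. y \<in> U \<Longrightarrow> invertible (M y)"
    unfolding eventually_nhds by blast
  have dg: "(?g has_vector_derivative P ** ?N' y ** Q) (at y)" if "invertible (M y)" for y
    by (rule has_vector_derivative_sandwich[OF has_vector_derivative_matrix_inv[OF M that]])
  have "\<forall>\<^sub>F y in nhds x. ?g differentiable (at y)"
    using U by (auto simp: eventually_nhds intro!: exI[of _ U] differentiableI_vector[OF dg])
  moreover have "((\<lambda>y. vector_derivative ?g (at y)) has_vector_derivative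
      P ** (2 *\<^sub>R (N ** M' x ** N ** M' x ** N) - N ** M'' ** N) ** Q) (at x)"
  proof (rule has_vector_derivative_transform_within_open[OF _ U(1,2)])
    have inner: "- (N ** M' x ** - (N ** M' x ** N) + (N ** M'' + - (N ** M' x ** N) ** M' x) ** N)
        = 2 *\<^sub>R (N ** M' x ** N ** M' x ** N) - N ** M'' ** N"
      unfolding N_def emb_eq_iff[symmetric] emb_hom by (simp add: algebra_simps scaleR_2)
    show "((\<lambda>y. P ** ?N' y ** Q) has_vector_derivative
        P ** (2 *\<^sub>R (N ** M' x ** N ** M' x ** N) - N ** M'' ** N) ** Q) (at x)"
      using has_vector_derivative_sandwich[OF has_vector_derivative_minus[OF
          has_vector_derivative_matrix_mult[OF has_vector_derivative_matrix_mult[OF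
            has_vector_derivative_matrix_inv[OF M inv] M'] has_vector_derivative_matrix_inv[OF M inv]]], of P Q]
      unfolding N_def[symmetric] inner .
    show "P ** ?N' y ** Q = vector_derivative ?g (at y)" if "y \<in> U" for y
      using vector_derivative_at[OF dg[OF U(3)[OF that]]] by simp
  qed
  ultimately show ?thesis by blast
qed

section \<open>Two identities in an arbitrary real algebra\<close>

text \<open>If \<open>M = E - e Kb X K\<close> with \<open>M N = 1\<close>, and \<open>Md = F - e K Xd Kb\<close>
  with \<open>F X = 1\<close> and \<open>Xd E = 1\<close> (in the application \<open>Md = M\<^sup>\<dagger>\<close>, \<open>Xd = X\<^sup>\<dagger>\<close>), then
  \<open>X + e X K N Kb X\<close> is a right inverse of \<open>Md\<close>; so it equals any left inverse \<open>Nd\<close>.\<close>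
lemma adjoint_inverse_identity:
  fixes K Kb X Xd E F N M Md Nd :: "'a::real_algebra_1"
  assumes ee: "e * e = 1"
    and M: "M = E - e *\<^sub>R (Kb * X * K)" and Md: "Md = F - e *\<^sub>R (K * Xd * Kb)"
    and MN: "M * N = 1" and FX: "F * X = 1" and XdE: "Xd * E = 1" and NdMd: "Nd * Md = 1"
  shows "Nd = X + e *\<^sub>R (X * K * N * Kb * X)"
proof -
  have Xd: "Xd = N - e *\<^sub>R (Xd * Kb * X * K * N)"
  proof -
    have "Xd = Xd * (M * N)" by (simp add: MN)
    also have "\<dots> = (Xd * E) * N - e *\<^sub>R (Xd * Kb * X * K * N)"
      by (simp add: M algebra_simps)
    finally show ?thesis by (simp add: XdE)
  qed
  have right_inverse: "Md * (X + e *\<^sub>R (X * K * N * Kb * X)) = 1"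
  proof -
    have "Md * (X + e *\<^sub>R (X * K * N * Kb * X))
        = (F * X) + e *\<^sub>R ((F * X) * K * N * Kb * X) - e *\<^sub>R (K * Xd * Kb * X)
          - (e * e) *\<^sub>R (K * Xd * Kb * X * K * N * Kb * X)"
      by (simp add: Md algebra_simps)
    also have "\<dots> = 1 + e *\<^sub>R (K * (N - Xd - e *\<^sub>R (Xd * Kb * X * K * N)) * Kb * X)"
      by (simp add: FX ee algebra_simps)
    also have "\<dots> = 1"
      using Xd by (simp add: algebra_simps)
    finally show ?thesis .
  qed
  have "Nd = Nd * (Md * (X + e *\<^sub>R (X * K * N * Kb * X)))" by (simp add: right_inverse)
  also have "\<dots> = X + e *\<^sub>R (X * K * N * Kb * X)" by (simp add: mult.assoc[symmetric] NdMd)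
  finally show ?thesis .
qed

text \<open>The key identity behind the cubic term: with \<open>W = S K + K Sd\<close> and \<open>Wb = Sd Kb + Kb S\<close>
  (the two Sylvester equations), \<open>Mx N Mx - Mxx = e Wb Nd W\<close>.  The proof rewrites \<open>Mx\<close> as
  \<open>Sd M + e Wb X K\<close> on the left factor and \<open>M Sd + e Kb X W\<close> on the right factor.\<close>
lemma nls_key_identity:
  fixes S Sd K Kb X E N M W Wb Mx Mxx Nd :: "'a::real_algebra_1"
  assumes ee: "e * e = 1"
    and M: "M = E - e *\<^sub>R (Kb * X * K)"
    and NM: "N * M = 1" and MN: "M * N = 1"
    and W: "W = S * K + K * Sd" and Wb: "Wb = Sd * Kb + Kb * S"
    and XS: "X * S = S * X" and SE: "Sd * E = E * Sd"
    and Mx: "Mx = E * Sd + e *\<^sub>R (Kb * S * X * K)"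
    and Mxx: "Mxx = E * Sd * Sd - e *\<^sub>R (Kb * S * S * X * K)"
    and Nd: "Nd = X + e *\<^sub>R (X * K * N * Kb * X)"
  shows "Mx * N * Mx - Mxx = e *\<^sub>R (Wb * Nd * W)"
proof -
  have XS': "X * (S * r) = S * (X * r)" for r by (metis XS mult.assoc)
  have Mx_left: "Mx = Sd * M + e *\<^sub>R (Wb * X * K)"
    by (simp add: Mx M Wb algebra_simps SE mult.assoc)
  have Mx_right: "Mx = M * Sd + e *\<^sub>R (Kb * X * W)"
    by (simp add: Mx M W algebra_simps XS' mult.assoc)
  have "Mx * N * Mx = (Sd * M + e *\<^sub>R (Wb * X * K)) * N * (M * Sd + e *\<^sub>R (Kb * X * W))"
    using Mx_left Mx_right by metis
  also have "\<dots> = Sd * (M * N) * M * Sd + e *\<^sub>R (Sd * (M * N) * Kb * X * W)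
      + e *\<^sub>R (Wb * X * K * (N * M) * Sd) + (e * e) *\<^sub>R (Wb * X * K * N * Kb * X * W)"
    by (simp add: algebra_simps)
  also have "\<dots> = Sd * M * Sd + e *\<^sub>R (Sd * Kb * X * W)
      + e *\<^sub>R (Wb * X * K * Sd) + (Wb * X * K * N * Kb * X * W)"
    by (simp add: MN NM ee)
  finally have square: "Mx * N * Mx = Sd * M * Sd + e *\<^sub>R (Sd * Kb * X * W)
      + e *\<^sub>R (Wb * X * K * Sd) + (Wb * X * K * N * Kb * X * W)" .
  have cubic: "e *\<^sub>R (Wb * Nd * W) = e *\<^sub>R (Wb * X * W) + Wb * X * K * N * Kb * X * W"
    by (simp add: Nd algebra_simps ee)
  have sylvester: "Sd * Kb * X * W + Wb * X * K * Sd + Kb * S * S * X * K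
      = Wb * X * W + Sd * Kb * X * K * Sd"
    by (simp add: W Wb distrib_left distrib_right mult.assoc XS' add_ac)
  have SdMSd: "Sd * M * Sd = E * Sd * Sd - e *\<^sub>R (Sd * Kb * X * K * Sd)"
    by (simp add: M algebra_simps SE)
  have "Sd * M * Sd + e *\<^sub>R (Sd * Kb * X * W) + e *\<^sub>R (Wb * X * K * Sd) = Mxx + e *\<^sub>R (Wb * X * W)"
  proof -
    have "e *\<^sub>R (Sd * Kb * X * W) + e *\<^sub>R (Wb * X * K * Sd) + e *\<^sub>R (Kb * S * S * X * K)
       = e *\<^sub>R (Wb * X * W) + e *\<^sub>R (Sd * Kb * X * K * Sd)"
      using arg_cong[OF sylvester, of "scaleR e"] by (simp only: scaleR_add_right)
    then show ?thesis unfolding SdMSd Mxx by (simp add: algebra_simps)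
  qed
  then show ?thesis unfolding square cubic by (simp add: algebra_simps)
qed

text \<open>\<open>\<Xi> = exp(x A + t B)\<close> with the commuting matrices \<open>A = -S\<close>, \<open>B = -i S\<^sup>2\<close>; its inverse is
  \<open>exp(x S + i t S\<^sup>2)\<close>.\<close>
definition Xi_inv :: "complex^'n^'n \<Rightarrow> real \<Rightarrow> real \<Rightarrow> complex^'n^'n" where
  "Xi_inv S x t = mexp (x *\<^sub>R S + t *\<^sub>R msc \<i> (S ** S))"

lemma Xi_plane: "Xi S x t = mexp (x *\<^sub>R (- S) + t *\<^sub>R (- msc \<i> (S ** S)))"
proof -
  have "msc (\<i> * complex_of_real t) (S ** S) = t *\<^sub>R msc \<i> (S ** S)"
    by (simp add: msc_def vec_eq_iff of_real_def)
  then show ?thesis by (simp add: Xi_def msc_real)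
qed

lemma Xi_inv_plane: "Xi_inv S x t = mexp (- (x *\<^sub>R (- S) + t *\<^sub>R (- msc \<i> (S ** S))))"
  unfolding Xi_inv_def by (simp only: minus_add_distrib scaleR_minus_right minus_minus)

lemma S_commutes_iS2: "S ** msc \<i> (S ** S) = msc \<i> (S ** S) ** S"
  by (simp add: msc_mult_left msc_mult_right matrix_mul_assoc)

text \<open>Hence \<open>(\<Xi>\<^sup>\<dagger>)\<^sup>-\<^sup>1 = Xi_inv\<^sup>\<dagger>\<close>, which makes \<open>M\<close> explicit.\<close>
lemma Xi_inverse: "Xi S x t ** Xi_inv S x t = mat 1" "Xi_inv S x t ** Xi S x t = mat 1"
  unfolding Xi_plane Xi_inv_plane
  using mexp_neg_inverse[of "- (x *\<^sub>R (- S) + t *\<^sub>R (- msc \<i> (S ** S)))"]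
  by (simp_all only: mexp_neg_inverse minus_minus)

lemma inverse_cadj_Xi: "matrix_inv (cadj (Xi S x t)) = cadj (Xi_inv S x t)"
  by (rule matrix_inv_unique) (simp_all add: cadj_mult[symmetric] Xi_inverse)

lemma S_commutes_Xi: "S ** Xi S x t = Xi S x t ** S"
  unfolding Xi_plane
  by (rule mexp_commute) (simp add: matrix_add_ldistrib matrix_add_rdistrib matrix_diff_ldistrib
      matrix_diff_rdistrib matrix_neg_left matrix_neg_right matrix_scaleR_left matrix_scaleR_right
      S_commutes_iS2)

lemma S_commutes_Xi_inv: "S ** Xi_inv S x t = Xi_inv S x t ** S"
  unfolding Xi_inv_def
  by (rule mexp_commute) (simp add: matrix_add_ldistrib matrix_add_rdistrib matrix_scaleR_left
      matrix_scaleR_right S_commutes_iS2)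

lemma Xi_deriv_x: "((\<lambda>z. Xi S z t) has_vector_derivative - (S ** Xi S x t)) (at x)"
  using mexp_plane_deriv_x[where A = "- S" and B = "- msc \<i> (S ** S)" and x = x and t = t]
  by (simp add: Xi_plane matrix_neg_left matrix_neg_right S_commutes_iS2)

lemma Xi_deriv_t: "((\<lambda>s. Xi S x s) has_vector_derivative - msc \<i> (S ** S ** Xi S x t)) (at t)"
  using mexp_plane_deriv_t[where A = "- S" and B = "- msc \<i> (S ** S)" and x = x and t = t]
  by (simp add: Xi_plane matrix_neg_left matrix_neg_right S_commutes_iS2 msc_mult_left)

lemma Xi_inv_deriv_x: "((\<lambda>z. Xi_inv S z t) has_vector_derivative S ** Xi_inv S x t) (at x)"
  unfolding Xi_inv_def by (rule mexp_plane_deriv_x[OF S_commutes_iS2])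

lemma Xi_inv_deriv_t: "((\<lambda>s. Xi_inv S x s) has_vector_derivative msc \<i> (S ** S ** Xi_inv S x t)) (at t)"
  unfolding Xi_inv_def
  using mexp_plane_deriv_t[OF S_commutes_iS2, where x = x and t = t] by (simp add: msc_mult_left)

lemma Mmat_eq: "Mmat \<epsilon> S K Kbar x t = cadj (Xi_inv S x t) - \<epsilon> *\<^sub>R (Kbar ** Xi S x t ** K)"
  by (simp add: Mmat_def inverse_cadj_Xi msc_real)

definition Mmat_x :: "real \<Rightarrow> complex^'n^'n \<Rightarrow> complex^'n^'n \<Rightarrow> complex^'n^'n \<Rightarrow> real \<Rightarrow> real \<Rightarrow> complex^'n^'n" where
  "Mmat_x \<epsilon> S K Kbar x t = cadj (Xi_inv S x t) ** cadj S + \<epsilon> *\<^sub>R (Kbar ** S ** Xi S x t ** K)"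

definition Mmat_xx :: "real \<Rightarrow> complex^'n^'n \<Rightarrow> complex^'n^'n \<Rightarrow> complex^'n^'n \<Rightarrow> real \<Rightarrow> real \<Rightarrow> complex^'n^'n" where
  "Mmat_xx \<epsilon> S K Kbar x t
     = cadj (Xi_inv S x t) ** cadj S ** cadj S - \<epsilon> *\<^sub>R (Kbar ** S ** S ** Xi S x t ** K)"

lemma Mmat_deriv_x:
  "((\<lambda>z. Mmat \<epsilon> S K Kbar z t) has_vector_derivative Mmat_x \<epsilon> S K Kbar x t) (at x)"
proof -
  have "((\<lambda>z. cadj (Xi_inv S z t) - \<epsilon> *\<^sub>R (Kbar ** Xi S z t ** K)) has_vector_derivative
      cadj (S ** Xi_inv S x t) - \<epsilon> *\<^sub>R (Kbar ** - (S ** Xi S x t) ** K)) (at x)"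
    by (intro has_vector_derivative_diff has_vector_derivative_cadj has_vector_derivative_const_scaleR
        has_vector_derivative_sandwich Xi_inv_deriv_x Xi_deriv_x)
  then show ?thesis
    by (simp add: Mmat_eq Mmat_x_def cadj_mult matrix_neg_left matrix_neg_right matrix_mul_assoc)
qed

lemma Mmat_x_deriv_x:
  "((\<lambda>z. Mmat_x \<epsilon> S K Kbar z t) has_vector_derivative Mmat_xx \<epsilon> S K Kbar x t) (at x)"
proof -
  have "((\<lambda>z. cadj (Xi_inv S z t) ** cadj S + \<epsilon> *\<^sub>R ((Kbar ** S) ** Xi S z t ** K)) has_vector_derivative
      cadj (Xi_inv S x t) ** 0 + cadj (S ** Xi_inv S x t) ** cadj S
        + \<epsilon> *\<^sub>R ((Kbar ** S) ** - (S ** Xi S x t) ** K)) (at x)"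
    by (intro has_vector_derivative_add has_vector_derivative_matrix_mult has_vector_derivative_cadj
        has_vector_derivative_const has_vector_derivative_const_scaleR has_vector_derivative_sandwich
        Xi_inv_deriv_x Xi_deriv_x)
  then show ?thesis
    by (simp add: Mmat_x_def Mmat_xx_def cadj_mult matrix_neg_left matrix_neg_right matrix_mul_assoc)
qed

lemma Mmat_deriv_t:
  "((\<lambda>s. Mmat \<epsilon> S K Kbar x s) has_vector_derivative msc (- \<i>) (Mmat_xx \<epsilon> S K Kbar x t)) (at t)"
proof -
  have "((\<lambda>s. cadj (Xi_inv S x s) - \<epsilon> *\<^sub>R (Kbar ** Xi S x s ** K)) has_vector_derivative
      cadj (msc \<i> (S ** S ** Xi_inv S x t)) - \<epsilon> *\<^sub>R (Kbar ** - msc \<i> (S ** S ** Xi S x t) ** K)) (at t)"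
    by (intro has_vector_derivative_diff has_vector_derivative_cadj has_vector_derivative_const_scaleR
        has_vector_derivative_sandwich Xi_inv_deriv_t Xi_deriv_t)
  then show ?thesis
    by (simp add: Mmat_eq Mmat_xx_def cadj_mult cadj_msc matrix_neg_left matrix_neg_right
        msc_mult_left msc_mult_right msc_diff msc_scaleR msc_uminus_scalar matrix_mul_assoc)
qed

lemma Mmat_adjoint_inverse:
  assumes eps: "\<epsilon> = 1 \<or> \<epsilon> = -1"
    and herm_K: "cadj K = K" and herm_Kbar: "cadj Kbar = Kbar"
    and inv: "invertible (Mmat \<epsilon> S K Kbar x t)"
  defines "N \<equiv> matrix_inv (Mmat \<epsilon> S K Kbar x t)"
  shows "cadj N = Xi S x t + \<epsilon> *\<^sub>R (Xi S x t ** K ** N ** Kbar ** Xi S x t)"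
proof -
  let ?M = "Mmat \<epsilon> S K Kbar x t" and ?X = "Xi S x t" and ?Y = "Xi_inv S x t"
  have MN: "?M ** N = mat 1" unfolding N_def by (rule matrix_inv_right[OF inv])
  have M: "?M = cadj ?Y - \<epsilon> *\<^sub>R (Kbar ** ?X ** K)" by (rule Mmat_eq)
  have adj_M: "cadj ?M = ?Y - \<epsilon> *\<^sub>R (K ** cadj ?X ** Kbar)"
    by (simp add: Mmat_eq cadj_diff cadj_scaleR cadj_mult herm_K herm_Kbar matrix_mul_assoc)
  have XdE: "cadj ?X ** cadj ?Y = mat 1" and NdMd: "cadj N ** cadj ?M = mat 1"
    by (simp_all add: cadj_mult[symmetric] Xi_inverse MN)
  note hyps = M adj_M MN Xi_inverse(2) XdE NdMd
  have "\<epsilon> * \<epsilon> = 1" using eps by auto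
  from this hyps[unfolded emb_eq_iff[symmetric] emb_hom]
  have "emb (cadj N) = emb ?X + \<epsilon> *\<^sub>R (emb ?X * emb K * emb N * emb Kbar * emb ?X)"
    by (rule adjoint_inverse_identity)
  then show ?thesis unfolding emb_eq_iff[symmetric] emb_hom .
qed

lemma Mmat_key_identity:
  assumes eps: "\<epsilon> = 1 \<or> \<epsilon> = -1"
    and herm_K: "cadj K = K" and herm_Kbar: "cadj Kbar = Kbar"
    and sylv1: "S ** K + K ** cadj S = V ** cadj V"
    and sylv2: "cadj S ** Kbar + Kbar ** S = Vbar ** cadj Vbar"
    and inv: "invertible (Mmat \<epsilon> S K Kbar x t)"
  defines "N \<equiv> matrix_inv (Mmat \<epsilon> S K Kbar x t)"
  shows "Mmat_x \<epsilon> S K Kbar x t ** N ** Mmat_x \<epsilon> S K Kbar x t - Mmat_xx \<epsilon> S K Kbar x t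
           = \<epsilon> *\<^sub>R (Vbar ** cadj Vbar ** cadj N ** (V ** cadj V))"
proof -
  let ?M = "Mmat \<epsilon> S K Kbar x t" and ?X = "Xi S x t" and ?Y = "Xi_inv S x t"
  let ?Mx = "Mmat_x \<epsilon> S K Kbar x t" and ?Mxx = "Mmat_xx \<epsilon> S K Kbar x t"
  have M: "?M = cadj ?Y - \<epsilon> *\<^sub>R (Kbar ** ?X ** K)" by (rule Mmat_eq)
  have NM: "N ** ?M = mat 1" and MN: "?M ** N = mat 1"
    unfolding N_def by (simp_all add: matrix_inv_right[OF inv] matrix_inv_left[OF inv])
  have XS: "?X ** S = S ** ?X" by (rule S_commutes_Xi[symmetric])
  have SE: "cadj S ** cadj ?Y = cadj ?Y ** cadj S"
    using arg_cong[OF S_commutes_Xi_inv[symmetric], of cadj] by (simp add: cadj_mult)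
  have Mx: "?Mx = cadj ?Y ** cadj S + \<epsilon> *\<^sub>R (Kbar ** S ** ?X ** K)"
    and Mxx: "?Mxx = cadj ?Y ** cadj S ** cadj S - \<epsilon> *\<^sub>R (Kbar ** S ** S ** ?X ** K)"
    by (simp_all add: Mmat_x_def Mmat_xx_def)
  have Nd: "cadj N = ?X + \<epsilon> *\<^sub>R (?X ** K ** N ** Kbar ** ?X)"
    unfolding N_def by (rule Mmat_adjoint_inverse[OF eps herm_K herm_Kbar inv])
  note hyps = M NM MN sylv1[symmetric] sylv2[symmetric] XS SE Mx Mxx Nd
  have "\<epsilon> * \<epsilon> = 1" using eps by auto
  from this hyps[unfolded emb_eq_iff[symmetric] emb_hom]
  have "emb ?Mx * emb N * emb ?Mx - emb ?Mxx
      = \<epsilon> *\<^sub>R (emb (Vbar ** cadj Vbar) * emb (cadj N) * emb (V ** cadj V))"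
    by (rule nls_key_identity)
  then show ?thesis unfolding emb_eq_iff[symmetric] emb_hom .
qed

section \<open>The matrix NLS equation\<close>

text \<open>Assembling the equation from the derivatives of \<open>q = V\<^sup>\<dagger> N Vbar\<close>, given
  \<open>M\<^sub>t = -i M\<^sub>x\<^sub>x\<close> and the key identity:
  \<open>i q\<^sub>t + q\<^sub>x\<^sub>x = 2 V\<^sup>\<dagger> N (M\<^sub>x N M\<^sub>x - M\<^sub>x\<^sub>x) N Vbar = 2 \<epsilon> q q\<^sup>\<dagger> q\<close>.\<close>
lemma nls_combination:
  fixes N Mx Mxx :: "complex^'n^'n" and V :: "complex^'m1^'n" and Vbar :: "complex^'m2^'n"
  assumes key: "Mx ** N ** Mx - Mxx = \<epsilon> *\<^sub>R (Vbar ** cadj Vbar ** cadj N ** (V ** cadj V))"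
  defines "q \<equiv> cadj V ** N ** Vbar"
  shows "msc \<i> (- (cadj V ** N ** msc (- \<i>) Mxx ** N ** Vbar))
           + cadj V ** (2 *\<^sub>R (N ** Mx ** N ** Mx ** N) - N ** Mxx ** N) ** Vbar
           - msc (2 * complex_of_real \<epsilon>) (q ** cadj q ** q) = 0"
proof -
  have i_qt: "msc \<i> (- (cadj V ** N ** msc (- \<i>) Mxx ** N ** Vbar)) = cadj V ** (- (N ** Mxx ** N)) ** Vbar"
    by (simp add: msc_mult_left msc_mult_right msc_msc msc_minus msc_one matrix_neg_left
        matrix_neg_right matrix_mul_assoc)
  have inner: "- (N ** Mxx ** N) + (2 *\<^sub>R (N ** Mx ** N ** Mx ** N) - N ** Mxx ** N)
      = 2 *\<^sub>R (N ** (Mx ** N ** Mx - Mxx) ** N)"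
    unfolding emb_eq_iff[symmetric] emb_hom by (simp add: algebra_simps scaleR_2)
  have cubic: "msc (2 * complex_of_real \<epsilon>) (q ** cadj q ** q)
      = cadj V ** (2 *\<^sub>R (N ** (\<epsilon> *\<^sub>R (Vbar ** cadj Vbar ** cadj N ** (V ** cadj V))) ** N)) ** Vbar"
  proof -
    have "msc (2 * complex_of_real \<epsilon>) A = (2 * \<epsilon>) *\<^sub>R A" for A :: "complex^'m2^'m1"
      using msc_real[of "2 * \<epsilon>" A] by simp
    then show ?thesis
      by (simp add: q_def cadj_mult matrix_scaleR_left matrix_scaleR_right matrix_mul_assoc)
  qed
  have "msc \<i> (- (cadj V ** N ** msc (- \<i>) Mxx ** N ** Vbar))
      + cadj V ** (2 *\<^sub>R (N ** Mx ** N ** Mx ** N) - N ** Mxx ** N) ** Vbar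
      = cadj V ** (2 *\<^sub>R (N ** (Mx ** N ** Mx - Mxx) ** N)) ** Vbar"
    unfolding i_qt inner[symmetric] by (simp only: matrix_add_ldistrib matrix_add_rdistrib)
  then show ?thesis unfolding cubic key by simp
qed

theorem proposition7p1:
  fixes \<epsilon> :: real
    and S K Kbar :: "complex^'n^'n"
    and V :: "complex^'m1^'n"
    and Vbar :: "complex^'m2^'n"
    and x t :: real
  assumes eps: "\<epsilon> = 1 \<or> \<epsilon> = -1"
    and herm_K: "cadj K = K"
    and herm_Kbar: "cadj Kbar = Kbar"
    and sylv1: "S ** K + K ** cadj S = V ** cadj V"
    and sylv2: "cadj S ** Kbar + Kbar ** S = Vbar ** cadj Vbar"
    and inv: "invertible (Mmat \<epsilon> S K Kbar x t)"
  shows "\<exists>qt qxx.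
           ((\<lambda>s. qsol \<epsilon> S K Kbar V Vbar x s) has_vector_derivative qt) (at t) \<and>
           (\<forall>\<^sub>F y in nhds x. (\<lambda>z. qsol \<epsilon> S K Kbar V Vbar z t) differentiable (at y)) \<and>
           ((\<lambda>y. vector_derivative (\<lambda>z. qsol \<epsilon> S K Kbar V Vbar z t) (at y))
              has_vector_derivative qxx) (at x) \<and>
           msc \<i> qt + qxx
             - msc (2 * complex_of_real \<epsilon>)
                 (qsol \<epsilon> S K Kbar V Vbar x t ** cadj (qsol \<epsilon> S K Kbar V Vbar x t)
                   ** qsol \<epsilon> S K Kbar V Vbar x t) = 0"
proof -
  have q: "qsol \<epsilon> S K Kbar V Vbar z s = cadj V ** matrix_inv (Mmat \<epsilon> S K Kbar z s) ** Vbar" for z s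
    by (simp add: qsol_def)
  note q_t = inverse_sandwich_deriv[OF Mmat_deriv_t inv, of "cadj V" Vbar]
  note q_xx = inverse_sandwich_second_deriv[where M = "\<lambda>z. Mmat \<epsilon> S K Kbar z t",
      OF Mmat_deriv_x Mmat_x_deriv_x inv, of "cadj V" Vbar]
  note nls = nls_combination[OF Mmat_key_identity[OF eps herm_K herm_Kbar sylv1 sylv2 inv]]
  show ?thesis
    unfolding q using q_t q_xx nls by blast
qed

end
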